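(* For every positive integer $n$, $$\#\mathcal{G}_{2n}(3n+1)=\#\mathcal{G}_{2n+1}(3n+2).$$
   Context: A gapset is a finite set $G\subset\mathbb{N}=\{1,2,\dots\}$ such that whenever $z\in G$ and $z=x+y$ with $x,y\in\mathbb{N}$, then $x\in G$ or $y\in G$. Its genus is $\#G$. Writing $G=\{\ell_1<\dots<\ell_g\}$, $G$ is called pure $\kappa$-sparse if $\ell_{i+1}-\ell_i\le\kappa$ for all $i\in[1,g-1]$ and $\ell_{i+1}-\ell_i=\kappa$ for at least one $i$. $\mathcal{G}_\kappa(g)$ denotes the set of pure $\kappa$-sparse gapsets of genus $g$. *)

theory Defs
  imports Main
begin

definition gapset :: "nat set \<Rightarrow> bool" where
  "gapset G \<longleftrightarrow> finite G \<and> 0 \<notin> G \<and>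
     (\<forall>z\<in>G. \<forall>x y. x \<ge> 1 \<and> y \<ge> 1 \<and> z = x + y \<longrightarrow> x \<in> G \<or> y \<in> G)"

definition pure_sparse :: "nat \<Rightarrow> nat set \<Rightarrow> bool" where
  "pure_sparse \<kappa> G \<longleftrightarrow>
     (let l = sorted_list_of_set G in
       (\<forall>i. i + 1 < length l \<longrightarrow> l ! (i + 1) - l ! i \<le> \<kappa>) \<and>
       (\<exists>i. i + 1 < length l \<and> l ! (i + 1) - l ! i = \<kappa>))"

definition pure_sparse_gapsets :: "nat \<Rightarrow> nat \<Rightarrow> nat set set" where
  "pure_sparse_gapsets \<kappa> g = {G. gapset G \<and> card G = g \<and> pure_sparse \<kappa> G}"

end

theory Submission
  imports Defs
begin

text \<open>Let m be the multiplicity (least non-element) of a pure k-sparse gapset G and l the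
  start of its last jump, the last pair of consecutive elements at distance k. If l < 2m,
  declaring m a gap and shifting the elements of [m, l] up by one and those beyond l up by
  two gives a pure (k+1)-sparse gapset of genus one more, with multiplicity m + 1 and last
  jump at l + 1; if l + 2 \<le> 2m, removing m - 1 and shifting back is the inverse operation.
  Otherwise the pairing x \<leftrightarrow> l + k - x yields 2 card G \<ge> l + k + 1, which for genus 3n+1
  resp. 3n+2 forces m = 2n resp. 2n+1 and l = 4n + 1; these exceptional gapsets are
  determined by their elements in [2n+2, 3n], and an explicit relabelling matches the two
  families.\<close>

definition consecutive :: "nat set \<Rightarrow> nat \<Rightarrow> nat \<Rightarrow> bool" where
  "consecutive G x y \<longleftrightarrow> x \<in> G \<and> y \<in> G \<and> x < y \<and> (\<forall>z\<in>G. z \<le> x \<or> y \<le> z)"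

definition sparse :: "nat \<Rightarrow> nat set \<Rightarrow> bool" where
  "sparse k G \<longleftrightarrow> (\<forall>x\<in>G. (\<exists>y\<in>G. x < y) \<longrightarrow> (\<exists>y\<in>G. x < y \<and> y \<le> x + k))"

definition jump_at :: "nat \<Rightarrow> nat set \<Rightarrow> nat \<Rightarrow> bool" where
  "jump_at k G x \<longleftrightarrow> x \<in> G \<and> x + k \<in> G \<and> (\<forall>z. x < z \<and> z < x + k \<longrightarrow> z \<notin> G)"

lemma sorted_list_of_set_nth_less_iff:
  assumes "i < length (sorted_list_of_set G)" "j < length (sorted_list_of_set G)"
  shows "sorted_list_of_set G ! i < sorted_list_of_set G ! j \<longleftrightarrow> i < j"
  using sorted_wrt_nth_less[OF strict_sorted_list_of_set] assms
  by (metis linorder_neqE_nat order_less_asym)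

lemma consecutive_sorted_list_of_set_nth:
  assumes "finite G"
  defines "xs \<equiv> sorted_list_of_set G"
  assumes i: "Suc i < length xs"
  shows "consecutive G (xs ! i) (xs ! Suc i)"
proof -
  have mem_iff: "z \<in> G \<longleftrightarrow> (\<exists>j<length xs. xs ! j = z)" for z
    using assms(1) unfolding xs_def by (metis in_set_conv_nth set_sorted_list_of_set)
  have "z \<le> xs ! i \<or> xs ! Suc i \<le> z" if "z \<in> G" for z
  proof -
    obtain j where j: "j < length xs" "xs ! j = z" using mem_iff \<open>z \<in> G\<close> by blast
    show ?thesis
      using sorted_list_of_set_nth_less_iff[of j G i] sorted_list_of_set_nth_less_iff[of "Suc i" G j]
        i j unfolding xs_def by (cases "j \<le> i"; cases "j = i"; cases "j = Suc i") auto
  qed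
  moreover have "xs ! i \<in> G" "xs ! Suc i \<in> G"
    using i nth_mem[of i xs] nth_mem[of "Suc i" xs] assms(1) unfolding xs_def by auto
  moreover have "xs ! i < xs ! Suc i"
    using i sorted_list_of_set_nth_less_iff[of i G "Suc i"] unfolding xs_def by simp
  ultimately show ?thesis unfolding consecutive_def by blast
qed

lemma consecutive_iff_sorted_list_of_set:
  assumes "finite G"
  defines "xs \<equiv> sorted_list_of_set G"
  shows "consecutive G x y \<longleftrightarrow> (\<exists>i. Suc i < length xs \<and> xs ! i = x \<and> xs ! Suc i = y)"
proof
  assume "consecutive G x y"
  then have xy: "x \<in> G" "y \<in> G" "x < y" and between: "\<And>z. z \<in> G \<Longrightarrow> z \<le> x \<or> y \<le> z"
    unfolding consecutive_def by auto
  have mem_iff: "z \<in> G \<longleftrightarrow> (\<exists>i<length xs. xs ! i = z)" for z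
    using assms(1) unfolding xs_def by (metis in_set_conv_nth set_sorted_list_of_set)
  obtain i j where ij: "i < length xs" "xs ! i = x" "j < length xs" "xs ! j = y"
    using xy mem_iff by metis
  note less_iff = sorted_list_of_set_nth_less_iff[where G = G, folded xs_def]
  have "i < j" using less_iff ij xy by blast
  have "j = Suc i"
  proof (rule ccontr)
    assume "j \<noteq> Suc i"
    then have "x < xs ! Suc i" "xs ! Suc i < y"
      using less_iff[of i "Suc i"] less_iff[of "Suc i" j] ij \<open>i < j\<close> by auto
    moreover have "xs ! Suc i \<in> G"
      using mem_iff ij(3) \<open>i < j\<close> \<open>j \<noteq> Suc i\<close> by (metis Suc_lessI less_trans)
    ultimately show False using between by fastforce
  qed
  then show "\<exists>i. Suc i < length xs \<and> xs ! i = x \<and> xs ! Suc i = y" using ij by blast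
qed (use consecutive_sorted_list_of_set_nth[OF assms(1)] xs_def in blast)

lemma consecutive_exists:
  assumes "finite G" "x \<in> G" "y \<in> G" "x < y"
  obtains s where "consecutive G x s" "s \<le> y"
proof -
  let ?S = "{z\<in>G. x < z}"
  have "finite ?S" "y \<in> ?S" using assms by auto
  then show ?thesis
    using that[of "Min ?S"] Min_in[of ?S] Min_le[of ?S]
    unfolding consecutive_def by (metis (mono_tags, lifting) assms(2) empty_iff mem_Collect_eq not_le)
qed

lemma sparse_iff_consecutive:
  assumes "finite G"
  shows "sparse k G \<longleftrightarrow> (\<forall>x y. consecutive G x y \<longrightarrow> y \<le> x + k)"
proof
  assume sparse: "sparse k G"
  show "\<forall>x y. consecutive G x y \<longrightarrow> y \<le> x + k"
  proof (intro allI impI)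
    fix x y assume xy: "consecutive G x y"
    then obtain z where "z \<in> G" "x < z" "z \<le> x + k"
      using sparse unfolding sparse_def consecutive_def by blast
    then show "y \<le> x + k" using xy unfolding consecutive_def by fastforce
  qed
next
  assume "\<forall>x y. consecutive G x y \<longrightarrow> y \<le> x + k"
  then show "sparse k G"
    unfolding sparse_def consecutive_def
    using consecutive_exists[OF assms] by (metis consecutive_def)
qed

lemma jump_at_iff_consecutive: "k \<ge> 1 \<Longrightarrow> jump_at k G x \<longleftrightarrow> consecutive G x (x + k)"
  unfolding jump_at_def consecutive_def by (auto simp: not_le)

lemma pure_sparse_iff:
  assumes "finite G" "k \<ge> 1"
  shows "pure_sparse k G \<longleftrightarrow> sparse k G \<and> (\<exists>x. jump_at k G x)"
proof -
  define xs where "xs = sorted_list_of_set G"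
  have cons: "consecutive G x y \<longleftrightarrow> (\<exists>i. Suc i < length xs \<and> xs ! i = x \<and> xs ! Suc i = y)" for x y
    using consecutive_iff_sorted_list_of_set[OF assms(1)] xs_def by blast
  have x_less: "consecutive G x y \<Longrightarrow> x < y" for x y
    unfolding consecutive_def by blast
  have steps: "(\<forall>i. i + 1 < length xs \<longrightarrow> xs ! (i + 1) - xs ! i \<le> k)
      \<longleftrightarrow> (\<forall>x y. consecutive G x y \<longrightarrow> y - x \<le> k)"
    unfolding cons by auto
  have "(\<forall>x y. consecutive G x y \<longrightarrow> y - x \<le> k) \<longleftrightarrow> sparse k G"
    unfolding sparse_iff_consecutive[OF assms(1)] using x_less by fastforce
  note sparse = steps[unfolded this]
  have jumps: "(\<exists>i. i + 1 < length xs \<and> xs ! (i + 1) - xs ! i = k)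
      \<longleftrightarrow> (\<exists>x y. consecutive G x y \<and> y - x = k)"
    unfolding cons by auto
  have "(\<exists>x y. consecutive G x y \<and> y - x = k) \<longleftrightarrow> (\<exists>x. jump_at k G x)"
    unfolding jump_at_iff_consecutive[OF assms(2)] using x_less
    by (metis add_diff_inverse_nat diff_add_inverse less_imp_le_nat not_le)
  note jump = jumps[unfolded this]
  show ?thesis using sparse jump unfolding pure_sparse_def Let_def xs_def by simp
qed

lemma gapset_finite: "gapset G \<Longrightarrow> finite G"
  and gapset_zero_not_mem: "gapset G \<Longrightarrow> 0 \<notin> G"
  unfolding gapset_def by blast+

lemma gapset_add_not_mem:
  "gapset G \<Longrightarrow> 1 \<le> a \<Longrightarrow> 1 \<le> b \<Longrightarrow> a \<notin> G \<Longrightarrow> b \<notin> G \<Longrightarrow> a + b \<notin> G"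
  unfolding gapset_def by blast

lemma gapset_diff_mem:
  assumes "gapset G" "z \<in> G" "1 \<le> x" "x < z" "x \<notin> G"
  shows "z - x \<in> G"
  using gapset_add_not_mem[OF assms(1,3), of "z - x"] assms(2,4,5) by fastforce

lemma gapset_card_interval_le:
  assumes G: "gapset G" and z: "z \<in> G" and a: "1 \<le> a" and ab: "a + b = z"
  shows "card {a..b} \<le> 2 * card (G \<inter> {a..b})"
proof -
  let ?S = "G \<inter> {a..b}"
  have "{a..b} \<subseteq> ?S \<union> (\<lambda>x. z - x) ` ?S"
  proof
    fix x assume x: "x \<in> {a..b}"
    show "x \<in> ?S \<union> (\<lambda>x. z - x) ` ?S"
    proof (cases "x \<in> G")
      case False
      then have "z - x \<in> ?S" using gapset_diff_mem[OF G z] x a ab by auto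
      moreover have "x = z - (z - x)" using x ab by auto
      ultimately show ?thesis by blast
    qed (use x in blast)
  qed
  then have "card {a..b} \<le> card (?S \<union> (\<lambda>x. z - x) ` ?S)" by (intro card_mono) auto
  also have "\<dots> \<le> card ?S + card ((\<lambda>x. z - x) ` ?S)" by (rule card_Un_le)
  also have "\<dots> \<le> 2 * card ?S" using card_image_le[of ?S "\<lambda>x. z - x"] by simp
  finally show ?thesis .
qed

definition multiplicity :: "nat set \<Rightarrow> nat" where
  "multiplicity G = (LEAST x. 1 \<le> x \<and> x \<notin> G)"

lemma multiplicity:
  assumes "finite G"
  shows "1 \<le> multiplicity G" "multiplicity G \<notin> G"
    and "\<And>x. 1 \<le> x \<Longrightarrow> x < multiplicity G \<Longrightarrow> x \<in> G"
proof -
  obtain y where "y \<notin> insert 0 G" using assms ex_new_if_finite[OF infinite_UNIV_nat] by blast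
  then have "1 \<le> y \<and> y \<notin> G" by auto
  then show "1 \<le> multiplicity G" "multiplicity G \<notin> G"
    using LeastI[of "\<lambda>x. 1 \<le> x \<and> x \<notin> G"] unfolding multiplicity_def by auto
  show "x \<in> G" if "1 \<le> x" "x < multiplicity G" for x
    using that not_less_Least[of x "\<lambda>x. 1 \<le> x \<and> x \<notin> G"] unfolding multiplicity_def by blast
qed

lemma multiplicity_eqI:
  assumes "1 \<le> m" "m \<notin> G" "\<And>x. 1 \<le> x \<Longrightarrow> x < m \<Longrightarrow> x \<in> G"
  shows "multiplicity G = m"
  unfolding multiplicity_def
  by (rule Least_equality) (use assms in \<open>auto simp: not_less[symmetric]\<close>)

definition last_jump :: "nat \<Rightarrow> nat set \<Rightarrow> nat" where
  "last_jump k G = Max {x. jump_at k G x}"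

lemma finite_jumps: "finite G \<Longrightarrow> finite {x. jump_at k G x}"
  by (rule finite_subset[of _ G]) (auto simp: jump_at_def)

lemma last_jump_eqI:
  assumes "finite G" "jump_at k G l" "\<And>x. jump_at k G x \<Longrightarrow> x \<le> l"
  shows "last_jump k G = l"
  unfolding last_jump_def using assms finite_jumps by (intro Max_eqI) auto

locale sparse_gapset =
  fixes G :: "nat set" and k :: nat
  assumes gapset: "gapset G" and sparse: "sparse k G" and has_jump: "\<exists>x. jump_at k G x"
    and k_ge_2: "2 \<le> k"
begin

definition "m = multiplicity G"
definition "l = last_jump k G"

lemma finite: "finite G" and zero_not_mem: "0 \<notin> G"
  using gapset gapset_finite gapset_zero_not_mem by blast+

lemma m_pos: "1 \<le> m" and m_not_mem: "m \<notin> G" and mem_below_m: "\<And>x. 1 \<le> x \<Longrightarrow> x < m \<Longrightarrow> x \<in> G"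
  using multiplicity[OF finite] unfolding m_def by auto

lemma jump_at_l: "jump_at k G l" and jump_le_l: "\<And>x. jump_at k G x \<Longrightarrow> x \<le> l"
  using has_jump Max_in[OF finite_jumps[OF finite]] Max_ge[OF finite_jumps[OF finite]]
  unfolding l_def last_jump_def by auto

lemma l_mem: "l \<in> G" and l_k_mem: "l + k \<in> G" and not_mem_in_jump: "\<And>z. l < z \<Longrightarrow> z < l + k \<Longrightarrow> z \<notin> G"
  using jump_at_l unfolding jump_at_def by auto

lemma l_pos: "1 \<le> l"
  using l_mem zero_not_mem by (cases l) auto

lemma mem_above_l: "u \<in> G \<Longrightarrow> l < u \<Longrightarrow> l + k \<le> u"
  using not_mem_in_jump by (meson not_le)

lemma double_m_not_mem: "2 * m \<notin> G"
  using gapset_add_not_mem[OF gapset m_pos m_pos m_not_mem m_not_mem] by (simp add: mult_2)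

lemma k_le_m: "k \<le> m"
proof (rule ccontr)
  assume "\<not> k \<le> m"
  then have "l + k - m \<notin> G" "1 \<le> l + k - m" using not_mem_in_jump m_pos by auto
  then have "l + k - m + m \<notin> G" using gapset_add_not_mem[OF gapset _ m_pos _ m_not_mem] by blast
  then show False using l_k_mem \<open>\<not> k \<le> m\<close> by simp
qed

lemma m_le_Suc_l: "m \<le> l + 1"
proof (rule ccontr)
  assume "\<not> m \<le> l + 1"
  then show False using mem_below_m[of "l + 1"] not_mem_in_jump[of "l + 1"] k_ge_2 by simp
qed

lemma jump_at_ge: "jump_at k G a \<Longrightarrow> m \<le> a + 1"
  using mem_below_m[of "a + 1"] k_ge_2 unfolding jump_at_def by fastforce

lemma successor_within:
  assumes "p \<in> G" "c \<in> G" "p < c"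
  obtains s where "consecutive G p s" "s \<le> p + k"
  using consecutive_exists[OF finite assms] sparse assms
  unfolding sparse_iff_consecutive[OF finite] by blast

text \<open>If u > l + m, its predecessor p in G satisfies p \<le> l + m and u < p + k (otherwise
  p would start a later jump), so u - m lies strictly inside the last jump and
  u = (u - m) + m would be a gap.\<close>
lemma mem_beyond_jump_le: "u \<in> G \<Longrightarrow> l + k \<le> u \<Longrightarrow> u \<le> l + m"
proof (induction u rule: less_induct)
  case (less u)
  show ?case
  proof (rule ccontr)
    assume u_large: "\<not> u \<le> l + m"
    let ?P = "{x\<in>G. x < u}"
    have P: "finite ?P" "l + k \<in> ?P" using finite l_k_mem u_large k_le_m by auto
    define p where "p = Max ?P"
    have "p \<in> ?P" using Max_in[OF P(1)] P(2) p_def by blast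
    then have p: "p \<in> G" "p < u" "l + k \<le> p" using Max_ge[OF P] p_def by auto
    have "consecutive G p u"
      unfolding consecutive_def using Max_ge[OF P(1)] p less.prems p_def by fastforce
    then obtain s where "consecutive G p s" "s \<le> p + k" using successor_within p less.prems by blast
    then have "u \<le> p + k" using \<open>consecutive G p u\<close> unfolding consecutive_def by fastforce
    moreover have "u \<noteq> p + k"
      using jump_le_l[of p] jump_at_iff_consecutive[of k G p] \<open>consecutive G p u\<close> p(3) k_ge_2 by auto
    moreover have "p \<le> l + m" using less.IH p by blast
    ultimately have "l < u - m" "u - m < l + k" using u_large k_le_m by auto
    then have "u - m \<notin> G" "1 \<le> u - m" using not_mem_in_jump by auto
    then have "u - m + m \<notin> G" using gapset_add_not_mem[OF gapset _ m_pos _ m_not_mem] by blast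
    then show False using less.prems u_large by simp
  qed
qed

lemma m_less_card: "x \<in> G \<Longrightarrow> y \<in> G \<Longrightarrow> m < x \<Longrightarrow> x < y \<Longrightarrow> m < card G"
proof -
  assume xy: "x \<in> G" "y \<in> G" "m < x" "x < y"
  then have "{1..<m} \<union> {x, y} \<subseteq> G" using mem_below_m by auto
  then have "card ({1..<m} \<union> {x, y}) \<le> card G" using finite card_mono by blast
  moreover have "card ({1..<m} \<union> {x, y}) = m + 1" using xy m_pos by (subst card_Un_disjoint) auto
  ultimately show ?thesis by simp
qed

text \<open>Every x in [m, l + k - m] that is missing from G has its partner l + k - x in G,
  and G contains [1, m) and l + k besides.\<close>
lemma card_if_late_jump:
  assumes late: "2 * m \<le> l + 1"
  shows "l + k + 1 \<le> 2 * card G"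
    and "2 * card G \<le> l + k + 2 \<Longrightarrow> x \<in> G \<Longrightarrow> x \<le> l + k - m \<or> x = l + k"
proof -
  let ?S = "G \<inter> {m..l + k - m}"
  let ?T = "{1..<m} \<union> ?S \<union> {l + k}"
  have "m + (l + k - m) = l + k" using late k_ge_2 by simp
  then have "card {m..l + k - m} \<le> 2 * card ?S"
    by (rule gapset_card_interval_le[OF gapset l_k_mem m_pos])
  then have S: "l + k + 1 \<le> 2 * card ?S + 2 * m" using late k_ge_2 by simp
  have T: "?T \<subseteq> G" using mem_below_m l_k_mem by auto
  have "card ({1..<m} \<union> ?S) = m - 1 + card ?S" by (subst card_Un_disjoint) auto
  moreover have "l + k \<notin> {1..<m} \<union> ?S" using late k_ge_2 m_pos by auto
  ultimately have "card ?T = m + card ?S" using m_pos by simp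
  then have card_T: "m + card ?S \<le> card G" using card_mono[OF finite T] by simp
  with S show "l + k + 1 \<le> 2 * card G" by simp
  assume "2 * card G \<le> l + k + 2" "x \<in> G"
  then have "?T = G"
    using card_subset_eq[OF finite T] S card_T \<open>card ?T = m + card ?S\<close> by simp
  then have "x \<in> ?T" using \<open>x \<in> G\<close> by blast
  then consider "x < m" | "x \<le> l + k - m" | "x = l + k" by fastforce
  then show "x \<le> l + k - m \<or> x = l + k" using late k_ge_2 by cases linarith+
qed

end

definition stretch :: "nat \<Rightarrow> nat \<Rightarrow> nat \<Rightarrow> nat" where
  "stretch m l x = (if x < m then x else if x \<le> l then x + 1 else x + 2)"

lemma stretch_less_iff: "m \<le> l + 1 \<Longrightarrow> stretch m l x < stretch m l y \<longleftrightarrow> x < y"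
  unfolding stretch_def by auto

lemma stretch_inj: "m \<le> l + 1 \<Longrightarrow> inj_on (stretch m l) A"
  by (rule inj_onI) (metis stretch_less_iff linorder_neqE_nat less_irrefl)

lemma stretch_ge: "x \<le> stretch m l x" and stretch_le: "stretch m l x \<le> x + 2"
  unfolding stretch_def by auto

definition widen :: "nat \<Rightarrow> nat set \<Rightarrow> nat set" where
  "widen k G = insert (multiplicity G) (stretch (multiplicity G) (last_jump k G) ` G)"

definition narrow :: "nat \<Rightarrow> nat set \<Rightarrow> nat set" where
  "narrow k G = {x. x \<noteq> multiplicity G - 1 \<and> stretch (multiplicity G - 1) (last_jump k G - 1) x \<in> G}"

text \<open>The genus bound rules out a jump of length k + 1 beyond l + 1 after widening.\<close>
locale widenable = sparse_gapset +
  assumes l_less_double_m: "l < 2 * m" and card_le: "card G \<le> 2 * k + 1"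
begin

abbreviation "f \<equiv> stretch m l"
abbreviation "W \<equiv> widen k G"

lemma widen_eq: "W = insert m (f ` G)"
  unfolding widen_def m_def l_def by simp

lemma f_less_iff: "f x < f y \<longleftrightarrow> x < y"
  using stretch_less_iff[OF m_le_Suc_l] .

lemma f_low: "x < m \<Longrightarrow> f x = x"
  and f_mid: "m \<le> x \<Longrightarrow> x \<le> l \<Longrightarrow> f x = x + 1"
  and f_high: "l < x \<Longrightarrow> f x = x + 2"
  using m_le_Suc_l unfolding stretch_def by auto

lemma f_ne_m: "f x \<noteq> m"
  using m_le_Suc_l unfolding stretch_def by auto

lemma finite_widen: "finite W"
  using finite widen_eq by simp

lemma f_le_Suc_l: "x \<le> l \<Longrightarrow> f x \<le> l + 1"
  unfolding stretch_def by auto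

lemma card_widen: "card W = card G + 1"
proof -
  have "m \<notin> f ` G" by (metis f_ne_m imageE)
  then show ?thesis using finite stretch_inj[OF m_le_Suc_l, of G] unfolding widen_eq by (simp add: card_image)
qed

lemma mem_widen_below: "1 \<le> x \<Longrightarrow> x \<le> m \<Longrightarrow> x \<in> W"
  using mem_below_m f_low unfolding widen_eq by (cases "x = m") (auto intro!: image_eqI[of x f x])

lemma pred_not_mem_if_not_mem_widen:
  assumes "x \<notin> W" "m < x" "x \<le> l + k"
  shows "x - 1 \<notin> G"
proof
  assume x: "x - 1 \<in> G"
  show False
  proof (cases "x - 1 \<le> l")
    case True
    then have "f (x - 1) = x" using f_mid x m_not_mem assms(2) by (cases "x - 1 = m") auto
    then have "x \<in> f ` G" using x by (metis image_eqI)
    then show False using assms(1) unfolding widen_eq by blast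
  next
    case False
    moreover have "x - 1 < l + k" using assms(2,3) by linarith
    ultimately show False using x not_mem_in_jump[of "x - 1"] by simp
  qed
qed

lemma gapset_widen: "gapset W"
  unfolding gapset_def
proof (intro conjI ballI allI impI)
  show "finite W" by (rule finite_widen)
  show "0 \<notin> W" using mem_widen_below[of 1] m_pos zero_not_mem unfolding widen_eq stretch_def by auto
  fix z a b assume z: "z \<in> W" and ab: "1 \<le> a \<and> 1 \<le> b \<and> z = a + b"
  show "a \<in> W \<or> b \<in> W"
  proof (rule ccontr)
    assume not_mem: "\<not> (a \<in> W \<or> b \<in> W)"
    then have large: "m < a" "m < b" using mem_widen_below ab by (meson not_le)+
    then obtain w where w: "w \<in> G" "z = f w" using z ab unfolding widen_eq by auto
    have "\<not> w \<le> l" using f_le_Suc_l w large ab l_less_double_m by fastforce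
    then have "z = w + 2" "l + k \<le> w" "w \<le> l + m"
      using f_high w mem_above_l mem_beyond_jump_le by auto
    then have "a - 1 \<notin> G" "b - 1 \<notin> G"
      using pred_not_mem_if_not_mem_widen not_mem large ab k_ge_2 by auto
    moreover have "1 \<le> a - 1" "1 \<le> b - 1" using large m_pos by auto
    ultimately have "(a - 1) + (b - 1) \<notin> G" using gapset_add_not_mem[OF gapset] by blast
    moreover have "(a - 1) + (b - 1) = w" using \<open>z = w + 2\<close> ab large by linarith
    ultimately show False using w(1) by simp
  qed
qed

lemma multiplicity_widen: "multiplicity W = m + 1"
proof (rule multiplicity_eqI)
  show "m + 1 \<notin> W"
  proof
    assume "m + 1 \<in> W"
    then obtain w where "w \<in> G" "f w = m + 1" unfolding widen_eq by auto
    moreover have "f w = m + 1 \<Longrightarrow> w = m" using m_le_Suc_l unfolding stretch_def by (auto split: if_splits)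
    ultimately show False using m_not_mem by blast
  qed
qed (use mem_widen_below in auto)

lemma Suc_l_mem_widen: "l + 1 \<in> W"
proof (cases "m \<le> l")
  case True then show ?thesis using f_mid l_mem unfolding widen_eq by (auto intro!: image_eqI[of _ f l])
qed (use m_le_Suc_l widen_eq in auto)

lemma jump_at_widen: "jump_at (k + 1) W (l + 1)"
  unfolding jump_at_def
proof (intro conjI allI impI)
  show "l + 1 \<in> W" by (rule Suc_l_mem_widen)
  have "f (l + k) = l + 1 + (k + 1)" using f_high k_ge_2 by simp
  then show "l + 1 + (k + 1) \<in> W" using l_k_mem unfolding widen_eq by (metis image_eqI insertCI)
  fix z assume z: "l + 1 < z \<and> z < l + 1 + (k + 1)"
  show "z \<notin> W"
  proof
    assume "z \<in> W"
    then obtain w where w: "w \<in> G" "z = f w" using z m_le_Suc_l unfolding widen_eq by auto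
    show False
    proof (cases "w \<le> l")
      case True
      then show False using w z f_le_Suc_l by fastforce
    qed (use w z f_high[of w] mem_above_l[of w] in simp)
  qed
qed

lemma last_jump_widen: "last_jump (k + 1) W = l + 1"
proof (rule last_jump_eqI[OF finite_widen jump_at_widen])
  fix x assume jump: "jump_at (k + 1) W x"
  show "x \<le> l + 1"
  proof (rule ccontr)
    assume x_large: "\<not> x \<le> l + 1"
    have "x \<in> W" "x + (k + 1) \<in> W" using jump unfolding jump_at_def by auto
    then obtain w v where wv: "w \<in> G" "x = f w" "v \<in> G" "x + (k + 1) = f v"
      using x_large m_le_Suc_l unfolding widen_eq by auto
    then have "l < w" using x_large unfolding stretch_def by (auto split: if_splits)
    then have "l + k \<le> w" using wv mem_above_l by blast
    have "w < v" using wv f_less_iff[of w v] by simp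
    then have "v = w + k + 1" "v \<le> l + m" using wv f_high mem_beyond_jump_le \<open>l < w\<close> by auto
    moreover have "m < card G" using m_less_card[OF wv(1,3)] \<open>w < v\<close> \<open>l + k \<le> w\<close> m_le_Suc_l k_ge_2 by simp
    ultimately show False using \<open>l + k \<le> w\<close> card_le by simp
  qed
qed

lemma widen_successor_of_m: "\<exists>y\<in>W. m < y \<and> y \<le> m + (k + 1)"
proof -
  have "m - 1 \<in> G" "m - 1 < l + k" using mem_below_m k_le_m k_ge_2 m_le_Suc_l by auto
  then obtain y where y: "y \<in> G" "m - 1 < y" "y \<le> m - 1 + k"
    using sparse l_k_mem unfolding sparse_def by blast
  have "y \<noteq> m" using y m_not_mem by blast
  then have "m < f y" using y stretch_ge[of y m l] by linarith
  moreover have "f y \<le> m + (k + 1)" using y stretch_le[of m l y] m_pos by linarith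
  moreover have "f y \<in> W" using y unfolding widen_eq by blast
  ultimately show ?thesis by blast
qed

lemma widen_successor_of_image:
  assumes w: "w \<in> G" and larger: "\<exists>y\<in>W. f w < y"
  shows "\<exists>y\<in>W. f w < y \<and> y \<le> f w + (k + 1)"
proof -
  have "w \<noteq> m" using w m_not_mem by blast
  then consider "w + 1 < m" | "w + 1 = m" | "m < w" by linarith
  then show ?thesis
  proof cases
    case 1
    then have "f (w + 1) = f w + 1" using f_low by simp
    moreover have "w + 1 \<in> G" using 1 mem_below_m by simp
    ultimately have "f w + 1 \<in> W" unfolding widen_eq by (metis image_eqI insertCI)
    then show ?thesis by (intro bexI[of _ "f w + 1"]) auto
  next
    case 2
    then show ?thesis using f_low[of w] mem_widen_below[of m] m_pos by (intro bexI[of _ m]) auto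
  next
    case 3
    then have "m < f w" using stretch_ge[of w m l] by simp
    then obtain v where "v \<in> G" "f w < f v" using larger unfolding widen_eq by auto
    then obtain y where y: "y \<in> G" "w < y" "y \<le> w + k"
      using sparse w f_less_iff unfolding sparse_def by blast
    have "w + 1 \<le> f w" using 3 unfolding stretch_def by auto
    moreover have "f w < f y" using y(2) f_less_iff by blast
    moreover have "f y \<le> y + 2" by (rule stretch_le)
    moreover have "f y \<in> W" using y unfolding widen_eq by blast
    ultimately show ?thesis using y(3) by (intro bexI[of _ "f y"]) auto
  qed
qed

lemma sparse_widen: "sparse (k + 1) W"
  unfolding sparse_def
proof (intro ballI impI)
  fix x assume "x \<in> W" and "\<exists>y\<in>W. x < y"
  then show "\<exists>y\<in>W. x < y \<and> y \<le> x + (k + 1)"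
    using widen_successor_of_m widen_successor_of_image unfolding widen_eq by blast
qed

lemma narrow_widen: "narrow (k + 1) W = G"
proof -
  have "narrow (k + 1) W = {x. x \<noteq> m \<and> f x \<in> W}"
    unfolding narrow_def multiplicity_widen last_jump_widen by simp
  also have "\<dots> = G"
    using f_ne_m stretch_inj[OF m_le_Suc_l, of UNIV] m_not_mem unfolding widen_eq inj_on_def by auto
  finally show ?thesis .
qed

end

text \<open>The genus bound makes the jump at l the only jump of length k.\<close>
locale narrowable = sparse_gapset +
  assumes k_ge_3: "3 \<le> k" and late_bound: "l + 2 \<le> 2 * m" and card_less: "card G < 2 * k"
begin

abbreviation "g \<equiv> stretch (m - 1) (l - 1)"
abbreviation "N \<equiv> narrow k G"

lemma m_ge_3: "3 \<le> m"
  using k_le_m k_ge_3 by simp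

lemma narrow_eq: "N = {x. x \<noteq> m - 1 \<and> g x \<in> G}"
  unfolding narrow_def m_def l_def by simp

lemma m_pred_le: "m - 1 \<le> l - 1 + 1"
  using m_le_Suc_l l_pos by simp

lemma g_less_iff: "g x < g y \<longleftrightarrow> x < y"
  using stretch_less_iff[OF m_pred_le] .

lemma g_low: "x < m - 1 \<Longrightarrow> g x = x"
  and g_mid: "m - 1 \<le> x \<Longrightarrow> x \<le> l - 1 \<Longrightarrow> g x = x + 1"
  and g_high: "l - 1 < x \<Longrightarrow> g x = x + 2"
  using m_le_Suc_l l_pos unfolding stretch_def by auto

lemma jump_unique: "jump_at k G a \<Longrightarrow> a = l"
proof (rule ccontr)
  assume a: "jump_at k G a" "a \<noteq> l"
  then have "a < l" using jump_le_l le_neq_implies_less by blast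
  have "a + k \<le> l" using a \<open>a < l\<close> l_mem unfolding jump_at_def by (meson not_le)
  have "m \<le> a + 1" using jump_at_ge a by simp
  have "m < card G"
    using m_less_card[of "a + k" "l + k"] a l_k_mem \<open>a < l\<close> \<open>m \<le> a + 1\<close> k_ge_3
    unfolding jump_at_def by simp
  then have "a < l + k - m" "l + k - m < a + k"
    using \<open>a + k \<le> l\<close> \<open>m \<le> a + 1\<close> card_less late_bound by auto
  then have "l + k - m \<notin> G" "1 \<le> l + k - m" using a(1) unfolding jump_at_def by auto
  then have "l + k - m + m \<notin> G" using gapset_add_not_mem[OF gapset _ m_pos _ m_not_mem] by blast
  then show False using l_k_mem m_le_Suc_l k_ge_3 by simp
qed

lemma mem_narrow_of_mid:
  assumes "y \<in> G" "m < y" "y \<le> l"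
  shows "y - 1 \<in> N \<and> g (y - 1) = y"
proof -
  have "g (y - 1) = y" using g_mid[of "y - 1"] assms(2,3) by simp
  moreover have "y - 1 \<noteq> m - 1" using assms(2) m_pos by simp
  ultimately show ?thesis using assms(1) unfolding narrow_eq by simp
qed

lemma mem_narrow_of_high:
  assumes "y \<in> G" "l < y"
  shows "y - 2 \<in> N \<and> g (y - 2) = y"
proof -
  have "l + k \<le> y" using mem_above_l assms by blast
  then have "g (y - 2) = y" using g_high[of "y - 2"] k_ge_3 by simp
  moreover have "y - 2 \<noteq> m - 1" using \<open>l + k \<le> y\<close> k_ge_3 m_le_Suc_l by simp
  ultimately show ?thesis using assms(1) unfolding narrow_eq by simp
qed

lemma mem_narrow_below: "1 \<le> x \<Longrightarrow> x < m - 1 \<Longrightarrow> x \<in> N"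
  using mem_below_m g_low unfolding narrow_eq by simp

lemma image_narrow: "g ` N = G - {m - 1}"
proof (intro set_eqI iffI)
  fix y assume "y \<in> g ` N"
  then obtain x where "x \<noteq> m - 1" "g x \<in> G" "y = g x" unfolding narrow_eq by blast
  moreover have "g x \<noteq> m - 1" using \<open>x \<noteq> m - 1\<close> unfolding stretch_def by auto
  ultimately show "y \<in> G - {m - 1}" by simp
next
  fix y assume y: "y \<in> G - {m - 1}"
  then have "y \<noteq> m" using m_not_mem by blast
  then consider "y < m - 1" | "m < y" "y \<le> l" | "l < y" using y by fastforce
  then show "y \<in> g ` N"
  proof cases
    case 1
    then have "y \<in> N" "g y = y" using y mem_narrow_below[of y] zero_not_mem g_low by (auto simp: Suc_le_eq)
    then show ?thesis by (metis image_eqI)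
  next
    case 2
    then show ?thesis using y mem_narrow_of_mid[of y] by (metis DiffD1 image_eqI)
  next
    case 3
    then show ?thesis using y mem_narrow_of_high[of y] by (metis DiffD1 image_eqI)
  qed
qed

lemma finite_narrow: "finite N"
proof (rule finite_subset)
  show "N \<subseteq> {..Max G}"
    using Max_ge[OF finite] stretch_ge[of _ "m - 1" "l - 1"] unfolding narrow_eq by (auto intro: le_trans)
qed simp

lemma card_narrow: "card N = card G - 1"
proof -
  have "card N = card (g ` N)" using stretch_inj[OF m_pred_le] by (simp add: card_image)
  then show ?thesis using image_narrow mem_below_m[of "m - 1"] m_ge_3 finite by simp
qed

lemma succ_not_mem_if_not_mem_narrow:
  assumes "x \<notin> N" "m - 1 \<le> x" "x + 2 \<le> l + k"
  shows "x + 1 \<notin> G"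
proof
  assume x: "x + 1 \<in> G"
  show False
  proof (cases "x + 1 \<le> l")
    case True
    moreover have "x + 1 \<noteq> m" using x m_not_mem by auto
    then have "m < x + 1" using assms(2) by linarith
    ultimately show False using mem_narrow_of_mid[of "x + 1"] x assms(1) by simp
  next
    case False
    then show False using x assms(3) not_mem_in_jump[of "x + 1"] by simp
  qed
qed

lemma gapset_narrow: "gapset N"
  unfolding gapset_def
proof (intro conjI ballI allI impI)
  show "finite N" by (rule finite_narrow)
  show "0 \<notin> N" using g_low[of 0] zero_not_mem m_ge_3 unfolding narrow_eq by simp
  fix z a b assume z: "z \<in> N" and ab: "1 \<le> a \<and> 1 \<le> b \<and> z = a + b"
  show "a \<in> N \<or> b \<in> N"
  proof (rule ccontr)
    assume not_mem: "\<not> (a \<in> N \<or> b \<in> N)"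
    then have large: "m - 1 \<le> a" "m - 1 \<le> b" using mem_narrow_below ab by (meson not_le)+
    then have "l - 1 < z" using ab late_bound by linarith
    then have gz: "g z = z + 2" "z + 2 \<in> G" using g_high z unfolding narrow_eq by auto
    then have "l + k \<le> z + 2" "z + 2 \<le> l + m"
      using mem_above_l mem_beyond_jump_le \<open>l - 1 < z\<close> by auto
    then have "a + 2 \<le> l + k" "b + 2 \<le> l + k" using large ab k_ge_3 by linarith+
    then have "a + 1 \<notin> G" "b + 1 \<notin> G"
      using succ_not_mem_if_not_mem_narrow not_mem large by blast+
    then have "(a + 1) + (b + 1) \<notin> G" using gapset_add_not_mem[OF gapset, of "a + 1" "b + 1"] by simp
    then show False using gz ab by simp
  qed
qed

lemma multiplicity_narrow: "multiplicity N = m - 1"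
  by (rule multiplicity_eqI) (use m_ge_3 mem_narrow_below narrow_eq in auto)

lemma jump_at_narrow: "jump_at (k - 1) N (l - 1)"
  unfolding jump_at_def
proof (intro conjI allI impI)
  show "l - 1 \<in> N"
  proof (cases "m \<le> l")
    case True
    moreover have "l \<noteq> m" using l_mem m_not_mem by auto
    ultimately have "m < l" by simp
    then show ?thesis using mem_narrow_of_mid[of l] l_mem by simp
  next
    case False
    then show ?thesis using m_le_Suc_l m_ge_3 mem_narrow_below[of "l - 1"] by simp
  qed
  have "l + k - 2 \<in> N" using mem_narrow_of_high[of "l + k"] l_k_mem k_ge_3 by simp
  moreover have "l - 1 + (k - 1) = l + k - 2" using k_ge_3 l_pos by simp
  ultimately show "l - 1 + (k - 1) \<in> N" by metis
  fix z assume z: "l - 1 < z \<and> z < l - 1 + (k - 1)"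
  then have "l < z + 2" "z + 2 < l + k" using l_pos k_ge_3 by auto
  then have "g z \<notin> G" using z g_high[of z] not_mem_in_jump by simp
  then show "z \<notin> N" unfolding narrow_eq by simp
qed

lemma last_jump_narrow: "last_jump (k - 1) N = l - 1"
proof (rule last_jump_eqI[OF finite_narrow jump_at_narrow])
  fix x assume jump: "jump_at (k - 1) N x"
  show "x \<le> l - 1"
  proof (rule ccontr)
    assume "\<not> x \<le> l - 1"
    then have "g x = x + 2" "g (x + (k - 1)) = x + k + 1" using g_high k_ge_3 by auto
    then have mem: "x + 2 \<in> G" "x + k + 1 \<in> G" using jump unfolding jump_at_def narrow_eq by auto
    then have "l + k \<le> x + 2" "x + k + 1 \<le> l + m"
      using mem_above_l mem_beyond_jump_le \<open>\<not> x \<le> l - 1\<close> k_ge_3 by auto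
    moreover have "m < card G" using m_less_card[OF mem] calculation m_le_Suc_l k_ge_3 by simp
    ultimately show False using card_less by simp
  qed
qed

text \<open>The anchor p is g a, except for a = m - 2, which is matched with m - 1: that element
  of G has no preimage in N.\<close>
lemma narrow_anchor:
  assumes a: "a \<in> N" "m - 1 \<le> a + 1" and larger: "\<exists>c\<in>N. a < c"
  obtains p where "p \<in> G" "\<exists>c\<in>G. p < c" "m - 1 \<le> p"
    "(p = a + 1 \<and> p \<le> l) \<or> (p = a + 2 \<and> l < p)"
proof (cases "a + 1 = m - 1")
  case True
  have "m - 1 \<in> G" using mem_below_m m_ge_3 by simp
  moreover have "\<exists>c\<in>G. m - 1 < c" using l_k_mem m_le_Suc_l k_ge_3 by (intro bexI[of _ "l + k"]) auto
  moreover have "m - 1 = a + 1" "m - 1 \<le> l" using True m_le_Suc_l by auto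
  ultimately show ?thesis using that[of "m - 1"] by blast
next
  case False
  then have "m - 1 < a" "g a \<in> G" using a unfolding narrow_eq by auto
  moreover obtain c where "c \<in> N" "a < c" using larger by blast
  then have "g c \<in> G" "g a < g c" using g_less_iff unfolding narrow_eq by auto
  moreover have "(g a = a + 1 \<and> g a \<le> l) \<or> (g a = a + 2 \<and> l < g a)"
    using \<open>m - 1 < a\<close> g_mid[of a] g_high[of a] by (cases "a \<le> l - 1") auto
  ultimately show ?thesis using that[of "g a"] by fastforce
qed

lemma narrow_successor_via_anchor:
  assumes p: "p \<in> G" "\<exists>c\<in>G. p < c" "m - 1 \<le> p"
    and a: "(p = a + 1 \<and> p \<le> l) \<or> (p = a + 2 \<and> l < p)"
  shows "\<exists>b\<in>N. a < b \<and> b \<le> a + (k - 1)"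
proof -
  obtain s where s: "consecutive G p s" "s \<le> p + k" using successor_within p by blast
  then have "s \<in> G" "p < s" unfolding consecutive_def by auto
  have s_jump: "s = p + k \<Longrightarrow> p = l"
    using jump_unique s(1) jump_at_iff_consecutive[of k G p] k_ge_3 by auto
  show ?thesis
  proof (cases "s \<le> l")
    case True
    have "s \<noteq> m" using \<open>s \<in> G\<close> m_not_mem by auto
    then have "m < s" using \<open>p < s\<close> p(3) by linarith
    then have "s - 1 \<in> N" using mem_narrow_of_mid \<open>s \<in> G\<close> True by blast
    moreover have "s \<noteq> p + k" using s_jump True \<open>p < s\<close> by auto
    ultimately show ?thesis using a s(2) \<open>p < s\<close> True by (intro bexI[of _ "s - 1"]) auto
  next
    case False
    then have "s - 2 \<in> N" "l + k \<le> s" using mem_narrow_of_high mem_above_l \<open>s \<in> G\<close> by auto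
    moreover have "s - 2 \<le> a + (k - 1)"
      using a
    proof
      assume "p = a + 1 \<and> p \<le> l"
      then show ?thesis using s(2) \<open>l + k \<le> s\<close> by linarith
    next
      assume p': "p = a + 2 \<and> l < p"
      then have "s \<noteq> p + k" using s_jump by auto
      then show ?thesis using p' s(2) by linarith
    qed
    ultimately show ?thesis using a \<open>p < s\<close> \<open>l + k \<le> s\<close> k_ge_3 by (intro bexI[of _ "s - 2"]) auto
  qed
qed

lemma sparse_narrow: "sparse (k - 1) N"
  unfolding sparse_def
proof (intro ballI impI)
  fix a assume a: "a \<in> N" and larger: "\<exists>c\<in>N. a < c"
  show "\<exists>b\<in>N. a < b \<and> b \<le> a + (k - 1)"
  proof (cases "a + 1 < m - 1")
    case True
    then show ?thesis using mem_narrow_below[of "a + 1"] k_ge_3 by (intro bexI[of _ "a + 1"]) auto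
  next
    case False
    then obtain p where "p \<in> G" "\<exists>c\<in>G. p < c" "m - 1 \<le> p"
      "(p = a + 1 \<and> p \<le> l) \<or> (p = a + 2 \<and> l < p)"
      using narrow_anchor[OF a] larger by (metis not_le)
    then show ?thesis by (rule narrow_successor_via_anchor)
  qed
qed

lemma widen_narrow: "widen (k - 1) N = G"
proof -
  have "widen (k - 1) N = insert (m - 1) (g ` N)"
    unfolding widen_def multiplicity_narrow last_jump_narrow by simp
  also have "\<dots> = G" using image_narrow mem_below_m[of "m - 1"] m_ge_3 by auto
  finally show ?thesis .
qed

end

text \<open>On the exceptional gapsets, exceptional_up fixes [1, 3n] except 2n + 1, which it sends
  to 3n + 1, the centre of the pairing x \<leftrightarrow> 6n + 2 - x on the (2n+1)-sparse side; it shifts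
  [3n + 1, 4n) up by one and fixes 4n + 1. Its value at 4n is irrelevant, as 4n = 2m is
  never an element.\<close>
definition exceptional_up :: "nat \<Rightarrow> nat \<Rightarrow> nat" where
  "exceptional_up n x = (if x = 2 * n + 1 then 3 * n + 1 else if x \<le> 3 * n then x
     else if x < 4 * n then x + 1 else if x = 4 * n + 1 then x else x + 1)"

definition exceptional_down :: "nat \<Rightarrow> nat \<Rightarrow> nat" where
  "exceptional_down n y = (if y = 3 * n + 1 then 2 * n + 1 else if y \<le> 3 * n then y
     else if y \<le> 4 * n then y - 1 else if y = 4 * n + 1 then y else y - 1)"

lemma exceptional_down_up: "1 \<le> n \<Longrightarrow> x \<noteq> 4 * n \<Longrightarrow> exceptional_down n (exceptional_up n x) = x"
  unfolding exceptional_up_def exceptional_down_def by auto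

lemma exceptional_up_down:
  "1 \<le> n \<Longrightarrow> y \<noteq> 2 * n + 1 \<Longrightarrow> y \<noteq> 4 * n + 2 \<Longrightarrow> exceptional_up n (exceptional_down n y) = y"
  unfolding exceptional_up_def exceptional_down_def by auto

definition exceptional_widen :: "nat \<Rightarrow> nat set \<Rightarrow> nat set" where
  "exceptional_widen n G = insert (2 * n) (exceptional_up n ` G)"

definition exceptional_narrow :: "nat \<Rightarrow> nat set \<Rightarrow> nat set" where
  "exceptional_narrow n G = exceptional_down n ` (G - {2 * n})"

locale wide_exceptional = sparse_gapset +
  fixes n :: nat
  assumes n_pos: "1 \<le> n" and k_eq: "k = 2 * n" and card_eq: "card G = 3 * n + 1"
    and late: "2 * m \<le> l"
begin

lemma m_eq: "m = 2 * n" and l_eq: "l = 4 * n + 1"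
proof -
  have "l \<noteq> 2 * m" using l_mem double_m_not_mem by auto
  moreover have "l + k + 1 \<le> 2 * card G" using card_if_late_jump(1) late by simp
  ultimately show "m = 2 * n" "l = 4 * n + 1" using late k_le_m k_eq card_eq by linarith+
qed

lemma mem_cases: "x \<in> G \<Longrightarrow> 1 \<le> x \<and> (x \<le> 4 * n + 1 \<or> x = 6 * n + 1)"
  using card_if_late_jump(2)[of x] late card_eq k_eq m_eq l_eq zero_not_mem
  by (cases x) auto

lemma mem_below: "1 \<le> x \<Longrightarrow> x < 2 * n \<Longrightarrow> x \<in> G"
  using mem_below_m m_eq by simp

lemma not_mem_2n: "2 * n \<notin> G"
  using m_not_mem m_eq by simp

lemma not_mem_4n: "4 * n \<notin> G"
  using double_m_not_mem m_eq by simp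

lemma mem_4n1: "4 * n + 1 \<in> G"
  using l_mem l_eq by simp

lemma mem_6n1: "6 * n + 1 \<in> G"
  using l_k_mem l_eq k_eq by simp

lemma mem_or_partner: "1 \<le> x \<Longrightarrow> x < 6 * n + 1 \<Longrightarrow> x \<in> G \<or> 6 * n + 1 - x \<in> G"
  using gapset_diff_mem[OF gapset mem_6n1] by blast

lemma mem_2n1: "2 * n + 1 \<in> G"
  using mem_or_partner[of "4 * n"] not_mem_4n n_pos by simp

abbreviation "H \<equiv> exceptional_widen n G"

lemma mem_H_iff: "y \<in> H \<longleftrightarrow> y = 2 * n \<or> (\<exists>x\<in>G. exceptional_up n x = y)"
  unfolding exceptional_widen_def by auto

lemma up_id: "x \<le> 3 * n \<Longrightarrow> x \<noteq> 2 * n + 1 \<Longrightarrow> exceptional_up n x = x"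
  unfolding exceptional_up_def by simp

lemma up_shift: "3 * n + 1 \<le> x \<Longrightarrow> x < 4 * n \<Longrightarrow> exceptional_up n x = x + 1"
  unfolding exceptional_up_def using n_pos by simp

lemma H_below: "1 \<le> y \<Longrightarrow> y \<le> 2 * n \<Longrightarrow> y \<in> H"
  using mem_H_iff mem_below up_id by (cases "y = 2 * n") force+

lemma H_special: "3 * n + 1 \<in> H" "4 * n + 1 \<in> H" "6 * n + 2 \<in> H"
proof -
  have "exceptional_up n (2 * n + 1) = 3 * n + 1" "exceptional_up n (4 * n + 1) = 4 * n + 1"
    "exceptional_up n (6 * n + 1) = 6 * n + 2"
    unfolding exceptional_up_def using n_pos by auto
  then show "3 * n + 1 \<in> H" "4 * n + 1 \<in> H" "6 * n + 2 \<in> H"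
    using mem_H_iff mem_2n1 mem_4n1 mem_6n1 by blast+
qed

lemma H_cases: "y \<in> H \<Longrightarrow> 1 \<le> y \<and> (y \<le> 4 * n + 1 \<or> y = 6 * n + 2)"
proof (unfold mem_H_iff, elim disjE bexE)
  fix x assume "x \<in> G" "exceptional_up n x = y"
  then show ?thesis using mem_cases[of x] n_pos unfolding exceptional_up_def by (auto split: if_splits)
qed (use n_pos in simp)

lemma not_2n1_H: "2 * n + 1 \<notin> H"
  using n_pos unfolding mem_H_iff exceptional_up_def by (auto split: if_splits)

lemma mid_H_iff:
  assumes "2 * n + 2 \<le> y" "y \<le> 3 * n"
  shows "y \<in> H \<longleftrightarrow> y \<in> G"
proof
  assume "y \<in> H"
  then show "y \<in> G" using assms unfolding mem_H_iff exceptional_up_def by (auto split: if_splits)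
qed (use assms up_id[of y] mem_H_iff in force)

lemma shifted_H: "3 * n + 2 \<le> y \<Longrightarrow> y \<le> 4 * n \<Longrightarrow> y - 1 \<in> G \<Longrightarrow> y \<in> H"
  using up_shift[of "y - 1"] mem_H_iff by force

lemma H_sum_6n2:
  assumes "a + b = 6 * n + 2" "2 * n < a" "2 * n < b"
  shows "a \<in> H \<or> b \<in> H"
proof -
  have "a \<in> H \<or> b \<in> H" if ab: "a + b = 6 * n + 2" "2 * n < a" "a \<le> b" for a b
  proof -
    consider "a = 2 * n + 1" | "2 * n + 2 \<le> a" "a \<le> 3 * n" | "a = 3 * n + 1" using ab by linarith
    then show ?thesis
    proof cases
      case 1
      then show ?thesis using ab H_special by simp
    next
      case 2
      show ?thesis
      proof (cases "a \<in> G")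
        case False
        then have "6 * n + 1 - a \<in> G" using mem_or_partner[of a] 2 by simp
        moreover have "b - 1 = 6 * n + 1 - a" "3 * n + 2 \<le> b" "b \<le> 4 * n" using 2 ab by auto
        ultimately show ?thesis using shifted_H[of b] by simp
      qed (use mid_H_iff 2 in blast)
    next
      case 3
      then show ?thesis using H_special by simp
    qed
  qed
  then show ?thesis using assms by (metis add.commute nat_le_linear)
qed

lemma gapset_H: "gapset H"
  unfolding gapset_def
proof (intro conjI ballI allI impI)
  show "finite H" unfolding exceptional_widen_def using finite by simp
  show "0 \<notin> H" using H_cases by fastforce
  fix z a b assume z: "z \<in> H" and ab: "1 \<le> a \<and> 1 \<le> b \<and> z = a + b"
  show "a \<in> H \<or> b \<in> H"
  proof (rule ccontr)
    assume not_mem: "\<not> (a \<in> H \<or> b \<in> H)"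
    then have "2 * n < a" "2 * n < b" using H_below ab by (meson not_le)+
    then have "a + b = 6 * n + 2" using H_cases[OF z] ab by linarith
    then show False using H_sum_6n2 not_mem \<open>2 * n < a\<close> \<open>2 * n < b\<close> by blast
  qed
qed

lemma card_H: "card H = 3 * n + 2"
proof -
  have "inj_on (exceptional_up n) G"
    by (rule inj_onI) (metis exceptional_down_up[OF n_pos] not_mem_4n)
  moreover have "2 * n \<notin> exceptional_up n ` G"
    using not_mem_2n n_pos unfolding exceptional_up_def by (auto split: if_splits)
  ultimately show ?thesis unfolding exceptional_widen_def using finite card_eq by (simp add: card_image)
qed

lemma multiplicity_H: "multiplicity H = 2 * n + 1"
  by (rule multiplicity_eqI) (use H_below not_2n1_H in auto)

lemma jump_at_H: "jump_at (2 * n + 1) H (4 * n + 1)"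
  unfolding jump_at_def
proof (intro conjI allI impI)
  show "4 * n + 1 \<in> H" "4 * n + 1 + (2 * n + 1) \<in> H" using H_special by auto
  fix z assume "4 * n + 1 < z \<and> z < 4 * n + 1 + (2 * n + 1)"
  then show "z \<notin> H" using H_cases[of z] by linarith
qed

lemma last_jump_H: "last_jump (2 * n + 1) H = 4 * n + 1"
proof (rule last_jump_eqI[OF _ jump_at_H])
  show "finite H" unfolding exceptional_widen_def using finite by simp
  fix x assume "jump_at (2 * n + 1) H x"
  then have "x \<in> H" "x + (2 * n + 1) \<in> H" unfolding jump_at_def by auto
  then show "x \<le> 4 * n + 1" using H_cases by fastforce
qed

lemma sparse_H: "sparse (2 * n + 1) H"
  unfolding sparse_def
proof (intro ballI impI)
  fix y assume "y \<in> H" and larger: "\<exists>v\<in>H. y < v"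
  then consider "y < 2 * n" | "y = 2 * n" | "2 * n + 1 \<le> y \<and> y \<le> 4 * n" | "y = 4 * n + 1"
    | "y = 6 * n + 2"
    using H_cases by fastforce
  then show "\<exists>v\<in>H. y < v \<and> v \<le> y + (2 * n + 1)"
  proof cases
    case 1
    then show ?thesis using H_below[of "y + 1"] by (intro bexI[of _ "y + 1"]) auto
  next
    case 2
    then show ?thesis using H_special by (intro bexI[of _ "3 * n + 1"]) auto
  next
    case 3
    then show ?thesis using H_special by (intro bexI[of _ "4 * n + 1"]) auto
  next
    case 4
    then show ?thesis using H_special by (intro bexI[of _ "6 * n + 2"]) auto
  next
    case 5
    then show ?thesis using larger H_cases by fastforce
  qed
qed

lemma exceptional_narrow_H: "exceptional_narrow n H = G"
proof -
  have "2 * n \<notin> exceptional_up n ` G"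
    using not_mem_2n n_pos unfolding exceptional_up_def by (auto split: if_splits)
  then have "H - {2 * n} = exceptional_up n ` G" unfolding exceptional_widen_def by auto
  then have "exceptional_narrow n H = exceptional_down n ` exceptional_up n ` G"
    unfolding exceptional_narrow_def by simp
  also have "\<dots> = G"
  proof -
    have "exceptional_down n (exceptional_up n x) = x" if "x \<in> G" for x
      using exceptional_down_up[OF n_pos] not_mem_4n that by metis
    then show ?thesis by (simp add: image_image cong: image_cong)
  qed
  finally show ?thesis .
qed

end

locale narrow_exceptional = sparse_gapset +
  fixes n :: nat
  assumes n_pos: "1 \<le> n" and k_eq: "k = 2 * n + 1" and card_eq: "card G = 3 * n + 2"
    and late: "2 * m \<le> l + 1"
begin

lemma m_eq: "m = 2 * n + 1" and l_eq: "l = 4 * n + 1"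
proof -
  have "l \<noteq> 2 * m" using l_mem double_m_not_mem by auto
  have "l + k + 1 \<le> 2 * card G" using card_if_late_jump(1) late by simp
  then show m: "m = 2 * n + 1" using late k_le_m k_eq card_eq by linarith
  have "l \<le> 4 * n + 2" "4 * n + 1 \<le> l" using late m \<open>l + k + 1 \<le> 2 * card G\<close> k_eq card_eq by linarith+
  then show "l = 4 * n + 1" using \<open>l \<noteq> 2 * m\<close> m by linarith
qed

lemma mem_cases: "x \<in> G \<Longrightarrow> 1 \<le> x \<and> (x \<le> 4 * n + 1 \<or> x = 6 * n + 2)"
  using card_if_late_jump(2)[of x] late card_eq k_eq m_eq l_eq zero_not_mem
  by (cases x) auto

lemma mem_below: "1 \<le> x \<Longrightarrow> x \<le> 2 * n \<Longrightarrow> x \<in> G"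
  using mem_below_m m_eq by simp

lemma not_mem_2n1: "2 * n + 1 \<notin> G"
  using m_not_mem m_eq by simp

lemma not_mem_4n2: "4 * n + 2 \<notin> G"
  using mem_cases n_pos by fastforce

lemma mem_4n1: "4 * n + 1 \<in> G"
  using l_mem l_eq by simp

lemma mem_6n2: "6 * n + 2 \<in> G"
  using l_k_mem l_eq k_eq by simp

lemma mem_or_partner: "1 \<le> x \<Longrightarrow> x < 6 * n + 2 \<Longrightarrow> x \<in> G \<or> 6 * n + 2 - x \<in> G"
  using gapset_diff_mem[OF gapset mem_6n2] by blast

lemma mem_3n1: "3 * n + 1 \<in> G"
  using mem_or_partner[of "3 * n + 1"] by auto

abbreviation "K \<equiv> exceptional_narrow n G"

lemma mem_K_iff: "x \<in> K \<longleftrightarrow> (\<exists>y\<in>G. y \<noteq> 2 * n \<and> exceptional_down n y = x)"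
  unfolding exceptional_narrow_def by auto

lemma down_mem_K: "y \<in> G \<Longrightarrow> y \<noteq> 2 * n \<Longrightarrow> exceptional_down n y \<in> K"
  unfolding exceptional_narrow_def by blast

lemma K_below: "1 \<le> x \<Longrightarrow> x < 2 * n \<Longrightarrow> x \<in> K"
  using down_mem_K[of x] mem_below[of x] unfolding exceptional_down_def by simp

lemma K_special: "2 * n + 1 \<in> K" "4 * n + 1 \<in> K" "6 * n + 1 \<in> K"
proof -
  have "exceptional_down n (3 * n + 1) = 2 * n + 1" "exceptional_down n (4 * n + 1) = 4 * n + 1"
    "exceptional_down n (6 * n + 2) = 6 * n + 1"
    unfolding exceptional_down_def using n_pos by auto
  then show "2 * n + 1 \<in> K" "4 * n + 1 \<in> K" "6 * n + 1 \<in> K"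
    using down_mem_K[OF mem_3n1] down_mem_K[OF mem_4n1] down_mem_K[OF mem_6n2] by simp_all
qed

lemma K_cases: "x \<in> K \<Longrightarrow> 1 \<le> x \<and> (x \<le> 4 * n + 1 \<or> x = 6 * n + 1)"
proof (unfold mem_K_iff, elim bexE conjE)
  fix y assume "y \<in> G" "exceptional_down n y = x"
  then show ?thesis using mem_cases[of y] n_pos unfolding exceptional_down_def by (auto split: if_splits)
qed

lemma not_2n_K: "2 * n \<notin> K" and not_4n_K: "4 * n \<notin> K"
  using n_pos unfolding mem_K_iff exceptional_down_def by (auto split: if_splits)

lemma mid_K: "2 * n + 2 \<le> x \<Longrightarrow> x \<le> 3 * n \<Longrightarrow> x \<in> G \<Longrightarrow> x \<in> K"
  using down_mem_K[of x] unfolding exceptional_down_def by simp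

lemma shifted_K: "3 * n + 1 \<le> x \<Longrightarrow> x + 1 \<le> 4 * n \<Longrightarrow> x + 1 \<in> G \<Longrightarrow> x \<in> K"
  using down_mem_K[of "x + 1"] unfolding exceptional_down_def by simp

lemma K_sum_6n1:
  assumes "a + b = 6 * n + 1" "2 * n \<le> a" "2 * n \<le> b"
  shows "a \<in> K \<or> b \<in> K"
proof -
  have "a \<in> K \<or> b \<in> K" if ab: "a + b = 6 * n + 1" "2 * n \<le> a" "a \<le> b" for a b
  proof -
    consider "a = 2 * n" | "a = 2 * n + 1" | "2 * n + 2 \<le> a" "a \<le> 3 * n" using ab by linarith
    then show ?thesis
    proof cases
      case 1
      then show ?thesis using ab K_special by simp
    next
      case 2
      then show ?thesis using K_special by simp
    next
      case 3
      show ?thesis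
      proof (cases "a \<in> G")
        case False
        then have "6 * n + 2 - a \<in> G" using mem_or_partner[of a] 3 by simp
        moreover have "b + 1 = 6 * n + 2 - a" "3 * n + 1 \<le> b" "b + 1 \<le> 4 * n" using 3 ab by auto
        ultimately show ?thesis using shifted_K[of b] by simp
      qed (use mid_K 3 in blast)
    qed
  qed
  then show ?thesis using assms by (metis add.commute nat_le_linear)
qed

lemma gapset_K: "gapset K"
  unfolding gapset_def
proof (intro conjI ballI allI impI)
  show "finite K" unfolding exceptional_narrow_def using finite by simp
  show "0 \<notin> K" using K_cases by fastforce
  fix z a b assume z: "z \<in> K" and ab: "1 \<le> a \<and> 1 \<le> b \<and> z = a + b"
  show "a \<in> K \<or> b \<in> K"
  proof (rule ccontr)
    assume not_mem: "\<not> (a \<in> K \<or> b \<in> K)"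
    then have "2 * n \<le> a" "2 * n \<le> b" using K_below ab by (meson not_le)+
    then consider "z = 4 * n" | "z = 4 * n + 1" | "z = 6 * n + 1" using K_cases[OF z] ab by linarith
    then show False
    proof cases
      case 1
      then show False using z not_4n_K by simp
    next
      case 2
      then have "a = 2 * n + 1 \<or> b = 2 * n + 1"
        using ab \<open>2 * n \<le> a\<close> \<open>2 * n \<le> b\<close> by presburger
      then show False using K_special not_mem by auto
    next
      case 3
      then have "a + b = 6 * n + 1" using ab by simp
      then show False using K_sum_6n1 not_mem \<open>2 * n \<le> a\<close> \<open>2 * n \<le> b\<close> by blast
    qed
  qed
qed

lemma card_K: "card K = 3 * n + 1"
proof -
  have "inj_on (exceptional_down n) (G - {2 * n})"
    by (rule inj_onI) (metis DiffD1 exceptional_up_down[OF n_pos] not_mem_2n1 not_mem_4n2)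
  then have "card K = card (G - {2 * n})" unfolding exceptional_narrow_def by (simp add: card_image)
  also have "\<dots> = 3 * n + 1" using card_eq mem_below[of "2 * n"] n_pos finite by simp
  finally show ?thesis .
qed

lemma multiplicity_K: "multiplicity K = 2 * n"
  by (rule multiplicity_eqI) (use K_below not_2n_K n_pos in auto)

lemma jump_at_K: "jump_at (2 * n) K (4 * n + 1)"
  unfolding jump_at_def
proof (intro conjI allI impI)
  show "4 * n + 1 \<in> K" "4 * n + 1 + 2 * n \<in> K" using K_special by auto
  fix z assume "4 * n + 1 < z \<and> z < 4 * n + 1 + 2 * n"
  then show "z \<notin> K" using K_cases[of z] by linarith
qed

lemma last_jump_K: "last_jump (2 * n) K = 4 * n + 1"
proof (rule last_jump_eqI[OF _ jump_at_K])
  show "finite K" unfolding exceptional_narrow_def using finite by simp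
  fix x assume "jump_at (2 * n) K x"
  then have "x \<in> K" "x + 2 * n \<in> K" unfolding jump_at_def by auto
  then show "x \<le> 4 * n + 1" using K_cases n_pos by fastforce
qed

lemma sparse_K: "sparse (2 * n) K"
  unfolding sparse_def
proof (intro ballI impI)
  fix y assume y: "y \<in> K" and larger: "\<exists>v\<in>K. y < v"
  then have "y \<noteq> 2 * n" using not_2n_K by auto
  then consider "y + 1 < 2 * n" | "y + 1 = 2 * n" | "2 * n + 1 \<le> y \<and> y \<le> 4 * n" | "y = 4 * n + 1"
    | "y = 6 * n + 1"
    using K_cases[OF y] by linarith
  then show "\<exists>v\<in>K. y < v \<and> v \<le> y + 2 * n"
  proof cases
    case 1
    then show ?thesis using K_below[of "y + 1"] by (intro bexI[of _ "y + 1"]) auto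
  next
    case 2
    then show ?thesis using K_special K_cases[OF y] by (intro bexI[of _ "2 * n + 1"]) auto
  next
    case 3
    then show ?thesis using K_special by (intro bexI[of _ "4 * n + 1"]) auto
  next
    case 4
    then show ?thesis using K_special n_pos by (intro bexI[of _ "6 * n + 1"]) auto
  next
    case 5
    then show ?thesis using larger K_cases by fastforce
  qed
qed

lemma exceptional_widen_K: "exceptional_widen n K = G"
proof -
  have "exceptional_up n (exceptional_down n y) = y" if "y \<in> G - {2 * n}" for y
    using exceptional_up_down[OF n_pos] not_mem_2n1 not_mem_4n2 that by (metis DiffD1)
  then have "exceptional_up n ` K = (\<lambda>y. y) ` (G - {2 * n})"
    unfolding exceptional_narrow_def image_image by (intro image_cong) auto
  then have "exceptional_up n ` K = G - {2 * n}" by simp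
  then show ?thesis unfolding exceptional_widen_def using mem_below[of "2 * n"] n_pos by auto
qed

end

lemma mem_pure_sparse_gapsets_iff:
  "1 \<le> k \<Longrightarrow> G \<in> pure_sparse_gapsets k g \<longleftrightarrow>
     gapset G \<and> card G = g \<and> sparse k G \<and> (\<exists>x. jump_at k G x)"
  unfolding pure_sparse_gapsets_def using pure_sparse_iff gapset_finite by blast

definition widen_map :: "nat \<Rightarrow> nat set \<Rightarrow> nat set" where
  "widen_map n G = (if last_jump (2 * n) G < 2 * multiplicity G
     then widen (2 * n) G else exceptional_widen n G)"

definition narrow_map :: "nat \<Rightarrow> nat set \<Rightarrow> nat set" where
  "narrow_map n G = (if last_jump (2 * n + 1) G + 2 \<le> 2 * multiplicity G
     then narrow (2 * n + 1) G else exceptional_narrow n G)"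

lemma widen_map_correct:
  assumes n: "1 \<le> n" and G: "G \<in> pure_sparse_gapsets (2 * n) (3 * n + 1)"
  shows "widen_map n G \<in> pure_sparse_gapsets (2 * n + 1) (3 * n + 2)"
    and "narrow_map n (widen_map n G) = G"
proof -
  interpret sparse_gapset G "2 * n"
    using G n by unfold_locales (auto simp: mem_pure_sparse_gapsets_iff)
  have card: "card G = 3 * n + 1" using G unfolding pure_sparse_gapsets_def by simp
  have "widen_map n G \<in> pure_sparse_gapsets (2 * n + 1) (3 * n + 2) \<and> narrow_map n (widen_map n G) = G"
  proof (cases "l < 2 * m")
    case True
    interpret widenable G "2 * n"
      by unfold_locales (use True card in auto)
    have "widen_map n G = W" unfolding widen_map_def using True l_def m_def by simp
    moreover have "narrow_map n W = G"
      unfolding narrow_map_def using last_jump_widen multiplicity_widen narrow_widen True by simp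
    ultimately show ?thesis
      using gapset_widen card_widen sparse_widen jump_at_widen card
      by (auto simp: mem_pure_sparse_gapsets_iff)
  next
    case False
    interpret wide_exceptional G "2 * n" n
      by unfold_locales (use False n card in auto)
    have "widen_map n G = H" unfolding widen_map_def using False l_def m_def by simp
    moreover have "narrow_map n H = G"
      unfolding narrow_map_def using last_jump_H multiplicity_H exceptional_narrow_H by simp
    ultimately show ?thesis
      using gapset_H card_H sparse_H jump_at_H by (auto simp: mem_pure_sparse_gapsets_iff)
  qed
  then show "widen_map n G \<in> pure_sparse_gapsets (2 * n + 1) (3 * n + 2)"
    and "narrow_map n (widen_map n G) = G" by auto
qed

lemma narrow_map_correct:
  assumes n: "1 \<le> n" and G: "G \<in> pure_sparse_gapsets (2 * n + 1) (3 * n + 2)"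
  shows "narrow_map n G \<in> pure_sparse_gapsets (2 * n) (3 * n + 1)"
    and "widen_map n (narrow_map n G) = G"
proof -
  interpret sparse_gapset G "2 * n + 1"
    using G n by unfold_locales (auto simp: mem_pure_sparse_gapsets_iff)
  have card: "card G = 3 * n + 2" using G unfolding pure_sparse_gapsets_def by simp
  have "narrow_map n G \<in> pure_sparse_gapsets (2 * n) (3 * n + 1) \<and> widen_map n (narrow_map n G) = G"
  proof (cases "l + 2 \<le> 2 * m")
    case True
    interpret narrowable G "2 * n + 1"
      by unfold_locales (use True n card in auto)
    have "narrow_map n G = N" unfolding narrow_map_def using True l_def m_def by simp
    moreover have "widen_map n N = G"
    proof -
      have "l - 1 < 2 * (m - 1)" using True l_pos by arith
      then show ?thesis
        unfolding widen_map_def using last_jump_narrow multiplicity_narrow widen_narrow by simp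
    qed
    ultimately show ?thesis
      using gapset_narrow card_narrow sparse_narrow jump_at_narrow card n
      by (auto simp: mem_pure_sparse_gapsets_iff)
  next
    case False
    interpret narrow_exceptional G "2 * n + 1" n
      by unfold_locales (use False n card in auto)
    have "narrow_map n G = K" unfolding narrow_map_def using False l_def m_def by simp
    moreover have "widen_map n K = G"
      unfolding widen_map_def using last_jump_K multiplicity_K exceptional_widen_K by simp
    ultimately show ?thesis
      using gapset_K card_K sparse_K jump_at_K n by (auto simp: mem_pure_sparse_gapsets_iff)
  qed
  then show "narrow_map n G \<in> pure_sparse_gapsets (2 * n) (3 * n + 1)"
    and "widen_map n (narrow_map n G) = G" by auto
qed

theorem mainTheorem1:
  fixes n :: nat
  assumes "n \<ge> 1"
  shows "card (pure_sparse_gapsets (2 * n) (3 * n + 1)) = card (pure_sparse_gapsets (2 * n + 1) (3 * n + 2))"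
proof -
  have "bij_betw (widen_map n) (pure_sparse_gapsets (2 * n) (3 * n + 1)) (pure_sparse_gapsets (2 * n + 1) (3 * n + 2))"
    by (rule bij_betw_byWitness[where f' = "narrow_map n"])
      (use widen_map_correct[OF assms] narrow_map_correct[OF assms] in auto)
  then show ?thesis by (rule bij_betw_same_card)
qed

end
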